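(* Let $N\ge 2$ be an integer and let $\boldsymbol{A}=(A_1,\dots,A_N)$ and $\boldsymbol{B}=(B_1,\dots,B_N)$ be probability vectors, i.e. $A_i\ge 0$, $B_i\ge 0$ for all $i$ and $\sum_{i=1}^N A_i=\sum_{i=1}^N B_i=1$. For $i=1,\dots,N$ put $S_i=A_i+B_i$. Suppose $S_i\le 1$ for all $i=1,\dots,N$. Then $L_{\min}=0$; that is, there exists a joint selection probability matrix $\boldsymbol{P}=(p_{i,j})_{i,j=1}^N$ with $$L(\boldsymbol{P})=\sum_{i=1}^N\Big(\sum_{j=1}^N p_{i,j}-A_i\Big)^2+\sum_{j=1}^N\Big(\sum_{i=1}^N p_{i,j}-B_j\Big)^2=0,$$ i.e. with $\sum_j p_{i,j}=A_i$ for all $i$ and $\sum_i p_{i,j}=B_j$ for all $j$.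
   Context: A joint selection probability matrix is an $N\times N$ real matrix $\boldsymbol{P}=(p_{i,j})$ with $p_{i,i}=0$ for all $i$, $p_{i,j}\ge 0$ for all $i,j$, and $\sum_{i,j}p_{i,j}=1$ (entry $p_{i,j}$ is the probability that player A selects arm $i$ and player B selects arm $j$). The satisfied preferences are $\pi_A(i)=\sum_j p_{i,j}$ and $\pi_B(j)=\sum_i p_{i,j}$, the loss is $L=\sum_i(\pi_A(i)-A_i)^2+\sum_j(\pi_B(j)-B_j)^2$, and $L_{\min}$ is the minimum of $L$ over all joint selection probability matrices. $S_i=A_i+B_i$ is called the popularity of arm $i$. *)

theory Defs
  imports Complex_Main
begin

text \<open>Arms are indexed by 1..N; vectors/matrices are functions on nat with that index range.\<close>

definition prob_vector :: "nat \<Rightarrow> (nat \<Rightarrow> real) \<Rightarrow> bool" where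
  "prob_vector N A \<longleftrightarrow> (\<forall>i\<in>{1..N}. A i \<ge> 0) \<and> (\<Sum>i=1..N. A i) = 1"

definition joint_sel_matrix :: "nat \<Rightarrow> (nat \<Rightarrow> nat \<Rightarrow> real) \<Rightarrow> bool" where
  "joint_sel_matrix N P \<longleftrightarrow>
     (\<forall>i\<in>{1..N}. P i i = 0) \<and> (\<forall>i\<in>{1..N}. \<forall>j\<in>{1..N}. P i j \<ge> 0) \<and>
     (\<Sum>i=1..N. \<Sum>j=1..N. P i j) = 1"

definition piA :: "nat \<Rightarrow> (nat \<Rightarrow> nat \<Rightarrow> real) \<Rightarrow> nat \<Rightarrow> real" where
  "piA N P i = (\<Sum>j=1..N. P i j)"

definition piB :: "nat \<Rightarrow> (nat \<Rightarrow> nat \<Rightarrow> real) \<Rightarrow> nat \<Rightarrow> real" where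
  "piB N P j = (\<Sum>i=1..N. P i j)"

definition loss :: "nat \<Rightarrow> (nat \<Rightarrow> real) \<Rightarrow> (nat \<Rightarrow> real) \<Rightarrow> (nat \<Rightarrow> nat \<Rightarrow> real) \<Rightarrow> real" where
  "loss N A B P = (\<Sum>i=1..N. (piA N P i - A i)^2) + (\<Sum>j=1..N. (piB N P j - B j)^2)"

definition L_min :: "nat \<Rightarrow> (nat \<Rightarrow> real) \<Rightarrow> (nat \<Rightarrow> real) \<Rightarrow> real" where
  "L_min N A B = Inf (loss N A B ` {P. joint_sel_matrix N P})"

end

theory Submission imports Defs begin

text \<open>Cut the arms into three consecutive blocks: the longest initial segment whose total
popularity is at most 1, the next arm, and the rest. Every block then has popularity at most 1
(the last one because the first two together exceed 1 out of a total of 2), and for three arms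
a zero-diagonal matrix with the prescribed margins can be written down explicitly. Splitting
each block entry proportionally to A in the row and to B in the column lifts it to a
zero-diagonal matrix for the original arms.\<close>

definition zero_diagonal_coupling ::
    "'a set \<Rightarrow> ('a \<Rightarrow> real) \<Rightarrow> ('a \<Rightarrow> real) \<Rightarrow> ('a \<Rightarrow> 'a \<Rightarrow> real) \<Rightarrow> bool" where
  "zero_diagonal_coupling I A B P \<longleftrightarrow>
     (\<forall>i\<in>I. P i i = 0) \<and> (\<forall>i\<in>I. \<forall>j\<in>I. P i j \<ge> 0) \<and>
     (\<forall>i\<in>I. (\<Sum>j\<in>I. P i j) = A i) \<and> (\<forall>j\<in>I. (\<Sum>i\<in>I. P i j) = B j)"

lemma zero_diagonal_coupling_transpose:
  "zero_diagonal_coupling I A B P \<Longrightarrow> zero_diagonal_coupling I B A (\<lambda>i j. P j i)"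
  unfolding zero_diagonal_coupling_def by blast

lemma zero_diagonal_coupling_3:
  fixes a b :: "nat \<Rightarrow> real"
  assumes nonneg: "\<forall>h\<in>{1,2,3}. a h \<ge> 0 \<and> b h \<ge> 0"
    and popularity: "\<forall>h\<in>{1,2,3}. a h + b h \<le> 1"
    and sum_a: "a 1 + a 2 + a 3 = 1" and sum_b: "b 1 + b 2 + b 3 = 1"
  shows "\<exists>Q. zero_diagonal_coupling {1,2,3} a b Q"
proof -
  \<comment> \<open>The zero-diagonal matrices with these margins form a one-parameter family in
      x = Q 1 2; take the least x for which all six entries are nonnegative.\<close>
  define x where "x = max (max 0 (a 1 - b 3)) (a 1 + a 2 - b 1 - b 3)"
  define Q :: "nat \<Rightarrow> nat \<Rightarrow> real" where "Q h l =
    (if h = 1 \<and> l = 2 then x else if h = 1 \<and> l = 3 then a 1 - x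
     else if h = 2 \<and> l = 3 then b 3 - a 1 + x else if h = 2 \<and> l = 1 then a 1 + a 2 - b 3 - x
     else if h = 3 \<and> l = 1 then b 1 - a 2 + b 3 - a 1 + x else if h = 3 \<and> l = 2 then b 2 - x
     else 0)" for h l
  have "a 1 \<ge> 0" "a 2 \<ge> 0" "a 3 \<ge> 0" "b 1 \<ge> 0" "b 2 \<ge> 0" "b 3 \<ge> 0"
    "a 1 + b 1 \<le> 1" "a 2 + b 2 \<le> 1" "a 3 + b 3 \<le> 1"
    using nonneg popularity by auto
  then have "\<forall>h\<in>{1,2,3}. \<forall>l\<in>{1,2,3}. Q h l \<ge> 0"
    unfolding Q_def x_def using sum_a sum_b by auto
  moreover have "\<forall>h\<in>{1,2,3}. Q h h = 0" unfolding Q_def by auto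
  moreover have "\<forall>h\<in>{1,2,3}. (\<Sum>l\<in>{1,2,3}. Q h l) = a h"
    unfolding Q_def using sum_a sum_b by auto
  moreover have "\<forall>l\<in>{1,2,3}. (\<Sum>h\<in>{1,2,3}. Q h l) = b l"
    unfolding Q_def using sum_a sum_b by auto
  ultimately show ?thesis unfolding zero_diagonal_coupling_def by blast
qed

definition push_sum :: "'a set \<Rightarrow> ('a \<Rightarrow> 'b) \<Rightarrow> ('a \<Rightarrow> real) \<Rightarrow> 'b \<Rightarrow> real" where
  "push_sum I g A h = (\<Sum>i\<in>{i\<in>I. g i = h}. A i)"

lemma push_sum_total:
  assumes "finite I" "finite H" "g ` I \<subseteq> H"
  shows "(\<Sum>h\<in>H. push_sum I g A h) = (\<Sum>i\<in>I. A i)"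
  unfolding push_sum_def using sum.group[OF assms] .

lemma push_sum_nonneg: "\<forall>i\<in>I. A i \<ge> 0 \<Longrightarrow> push_sum I g A h \<ge> 0"
  unfolding push_sum_def by (auto intro: sum_nonneg)

lemma member_le_push_sum:
  "finite I \<Longrightarrow> \<forall>i\<in>I. A i \<ge> 0 \<Longrightarrow> i \<in> I \<Longrightarrow> A i \<le> push_sum I g A (g i)"
  unfolding push_sum_def by (rule member_le_sum) auto

text \<open>A block of zero mass contains only arms of zero mass, and the corresponding entries of
Q vanish, so the junk value of division by zero never matters.\<close>

definition lift_coupling ::
    "'a set \<Rightarrow> ('a \<Rightarrow> 'b) \<Rightarrow> ('a \<Rightarrow> real) \<Rightarrow> ('a \<Rightarrow> real) \<Rightarrow> ('b \<Rightarrow> 'b \<Rightarrow> real) \<Rightarrow> 'a \<Rightarrow> 'a \<Rightarrow> real"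
  where
  "lift_coupling I g A B Q i j =
     Q (g i) (g j) * (A i / push_sum I g A (g i)) * (B j / push_sum I g B (g j))"

lemma lift_coupling_row_sum:
  assumes fin: "finite I" "finite H" and g: "g ` I \<subseteq> H"
    and A_nonneg: "\<forall>i\<in>I. A i \<ge> 0"
    and Q: "zero_diagonal_coupling H (push_sum I g A) (push_sum I g B) Q"
    and i: "i \<in> I"
  shows "(\<Sum>j\<in>I. lift_coupling I g A B Q i j) = A i"
proof -
  let ?GA = "push_sum I g A" and ?GB = "push_sum I g B"
  have gi: "g i \<in> H" using g i by auto
  have Q_nonneg: "\<forall>h\<in>H. \<forall>l\<in>H. Q h l \<ge> 0"
    and Q_row: "\<forall>h\<in>H. (\<Sum>l\<in>H. Q h l) = ?GA h"
    and Q_col: "\<forall>l\<in>H. (\<Sum>h\<in>H. Q h l) = ?GB l"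
    using Q unfolding zero_diagonal_coupling_def by blast+
  have cancel_GB: "Q (g i) l * ?GB l / ?GB l = Q (g i) l" if l: "l \<in> H" for l
  proof (cases "?GB l = 0")
    case True
    then have "(\<Sum>h\<in>H. Q h l) = 0" using Q_col l by simp
    then have "Q (g i) l = 0" using Q_nonneg l gi fin by (simp add: sum_nonneg_eq_0_iff)
    then show ?thesis by simp
  qed simp
  have block_sum: "(\<Sum>j\<in>I. Q (g i) (g j) * (B j / ?GB (g j))) = ?GA (g i)"
  proof -
    have "(\<Sum>j\<in>I. Q (g i) (g j) * (B j / ?GB (g j)))
        = (\<Sum>l\<in>H. \<Sum>j\<in>{j\<in>I. g j = l}. Q (g i) l * B j / ?GB l)"
      by (simp add: sum.group[OF fin g, symmetric])
    also have "\<dots> = (\<Sum>l\<in>H. Q (g i) l * ?GB l / ?GB l)"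
      unfolding push_sum_def by (simp add: sum_distrib_left sum_divide_distrib)
    also have "\<dots> = (\<Sum>l\<in>H. Q (g i) l)"
      using cancel_GB by simp
    also have "\<dots> = ?GA (g i)" using Q_row gi by simp
    finally show ?thesis .
  qed
  have "(\<Sum>j\<in>I. lift_coupling I g A B Q i j)
      = A i / ?GA (g i) * (\<Sum>j\<in>I. Q (g i) (g j) * (B j / ?GB (g j)))"
    unfolding lift_coupling_def by (simp add: sum_distrib_left mult_ac)
  also have "\<dots> = A i"
  proof (cases "?GA (g i) = 0")
    case True
    then have "A i = 0"
      using member_le_push_sum[OF fin(1) A_nonneg i, of g] A_nonneg i by auto
    then show ?thesis by simp
  qed (use block_sum in simp)
  finally show ?thesis .
qed

lemma zero_diagonal_coupling_lift:
  assumes fin: "finite I" "finite H" and g: "g ` I \<subseteq> H"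
    and nonneg: "\<forall>i\<in>I. A i \<ge> 0" "\<forall>i\<in>I. B i \<ge> 0"
    and Q: "zero_diagonal_coupling H (push_sum I g A) (push_sum I g B) Q"
  shows "zero_diagonal_coupling I A B (lift_coupling I g A B Q)"
proof -
  have "Q h l \<ge> 0" if "h \<in> H" "l \<in> H" for h l
    using Q that unfolding zero_diagonal_coupling_def by blast
  then have "lift_coupling I g A B Q i j \<ge> 0" if "i \<in> I" "j \<in> I" for i j
    using that g nonneg push_sum_nonneg[OF nonneg(1)] push_sum_nonneg[OF nonneg(2)]
    unfolding lift_coupling_def by (auto intro!: mult_nonneg_nonneg divide_nonneg_nonneg)
  moreover have "lift_coupling I g A B Q i i = 0" if "i \<in> I" for i
    using Q that g unfolding zero_diagonal_coupling_def lift_coupling_def by auto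
  moreover have "(\<Sum>j\<in>I. lift_coupling I g A B Q i j) = A i" if "i \<in> I" for i
    using lift_coupling_row_sum[OF fin g nonneg(1) Q that] .
  moreover have "(\<Sum>i\<in>I. lift_coupling I g A B Q i j) = B j" if "j \<in> I" for j
  proof -
    have "(\<Sum>i\<in>I. lift_coupling I g A B Q i j)
        = (\<Sum>i\<in>I. lift_coupling I g B A (\<lambda>h l. Q l h) j i)"
      unfolding lift_coupling_def by (simp add: mult_ac)
    also have "\<dots> = B j"
      using lift_coupling_row_sum[OF fin g nonneg(2) zero_diagonal_coupling_transpose[OF Q] that] .
    finally show ?thesis .
  qed
  ultimately show ?thesis unfolding zero_diagonal_coupling_def by blast
qed

lemma zero_diagonal_coupling_exists:
  fixes A B :: "nat \<Rightarrow> real"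
  assumes A: "prob_vector N A" and B: "prob_vector N B"
    and popularity: "\<forall>i\<in>{1..N}. A i + B i \<le> 1"
  shows "\<exists>P. zero_diagonal_coupling {1..N} A B P"
proof -
  let ?I = "{1..N}" and ?H = "{1::nat, 2, 3}"
  have nonneg: "\<forall>i\<in>?I. A i \<ge> 0" "\<forall>i\<in>?I. B i \<ge> 0"
    and totals: "(\<Sum>i\<in>?I. A i) = 1" "(\<Sum>i\<in>?I. B i) = 1"
    using A B unfolding prob_vector_def by auto
  define c where "c k = (\<Sum>i=1..k. A i + B i)" for k
  have "c N > 1" "\<not> c 0 > 1" using totals unfolding c_def by (simp_all add: sum.distrib)
  then obtain k where k: "k < N" "c k \<le> 1" "c (Suc k) > 1"
    using ex_least_nat_less[of "\<lambda>k. c k > 1"] by force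
  define g :: "nat \<Rightarrow> nat" where "g i = (if i \<le> k then 1 else if i = Suc k then 2 else 3)" for i
  have g: "g ` ?I \<subseteq> ?H" unfolding g_def by auto
  let ?a = "push_sum ?I g A" and ?b = "push_sum ?I g B"
  have "{i\<in>?I. g i = 1} = {1..k}" "{i\<in>?I. g i = 2} = {Suc k}"
    using k unfolding g_def by auto
  then have "?a 1 + ?b 1 = c k" "?a 2 + ?b 2 = A (Suc k) + B (Suc k)"
    unfolding push_sum_def c_def by (simp_all add: sum.distrib)
  moreover have "c (Suc k) = c k + A (Suc k) + B (Suc k)" unfolding c_def by simp
  moreover have "?a 1 + ?a 2 + ?a 3 = 1" "?b 1 + ?b 2 + ?b 3 = 1"
    using push_sum_total[OF _ _ g, of A] push_sum_total[OF _ _ g, of B] totals by simp_all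
  moreover have "\<forall>h\<in>?H. ?a h \<ge> 0 \<and> ?b h \<ge> 0"
    using nonneg by (simp add: push_sum_nonneg)
  ultimately obtain Q where "zero_diagonal_coupling ?H ?a ?b Q"
    using zero_diagonal_coupling_3[of ?a ?b] popularity k by force
  then show ?thesis using zero_diagonal_coupling_lift[OF _ _ g nonneg] by blast
qed

lemma joint_sel_matrix_if_zero_diagonal_coupling:
  assumes "prob_vector N A" and P: "zero_diagonal_coupling {1..N} A B P"
  shows "joint_sel_matrix N P"
proof -
  have "(\<Sum>i=1..N. \<Sum>j=1..N. P i j) = (\<Sum>i=1..N. A i)"
    using P unfolding zero_diagonal_coupling_def by simp
  then show ?thesis
    using assms unfolding zero_diagonal_coupling_def joint_sel_matrix_def prob_vector_def by simp
qed

lemma L_min_eq_0_if_loss_eq_0: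
  assumes "joint_sel_matrix N P" and "loss N A B P = 0"
  shows "L_min N A B = 0"
  unfolding L_min_def
proof (rule cInf_eq_minimum)
  show "0 \<in> loss N A B ` {P. joint_sel_matrix N P}" using assms by force
next
  fix x assume "x \<in> loss N A B ` {P. joint_sel_matrix N P}"
  then show "0 \<le> x" unfolding loss_def by (auto intro!: add_nonneg_nonneg sum_nonneg)
qed

theorem theorem2p1:
  fixes N :: nat and A B :: "nat \<Rightarrow> real"
  assumes "N \<ge> 2"
    and "prob_vector N A" and "prob_vector N B"
    and "\<forall>i\<in>{1..N}. A i + B i \<le> 1"
  shows "L_min N A B = 0 \<and>
         (\<exists>P. joint_sel_matrix N P \<and> loss N A B P = 0 \<and>
              (\<forall>i\<in>{1..N}. piA N P i = A i) \<and> (\<forall>j\<in>{1..N}. piB N P j = B j))"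
proof -
  obtain P where P: "zero_diagonal_coupling {1..N} A B P"
    using zero_diagonal_coupling_exists[OF assms(2-4)] by blast
  have joint: "joint_sel_matrix N P"
    using joint_sel_matrix_if_zero_diagonal_coupling[OF assms(2) P] .
  have margins: "\<forall>i\<in>{1..N}. piA N P i = A i" "\<forall>j\<in>{1..N}. piB N P j = B j"
    using P unfolding zero_diagonal_coupling_def piA_def piB_def by simp_all
  then have "loss N A B P = 0" unfolding loss_def by simp
  then show ?thesis using L_min_eq_0_if_loss_eq_0[OF joint] joint margins by blast
qed

end
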